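(* Let $R\ge1$, $L\ge2$, and let $f_\theta,f_{\tilde\theta}\in\mathcal{N}_\rho(L,\boldsymbol n_L,R)$ share the same architecture, with parameter vectors $\theta,\tilde\theta\in\mathbb{R}^{\boldsymbol n_L}$. Set $\eta=1$ if $\rho$ is the sigmoid and $\eta=2$ if $\rho=\tanh$. Then for every $p\in\{1,\dots,d\}$ and $x\in\Omega$, $$|\partial_{x_p}^2f_\theta(x)-\partial_{x_p}^2f_{\tilde\theta}(x)|\le2(L-1)L\eta\sqrt{\boldsymbol n_L}\,\pi_{L-1}^3R^{3L-3}\|\theta-\tilde\theta\|_{\ell^2}.$$
   Context: $\Omega\subset(-1,1)^d$. Neural networks: widths $n_0=d,n_1,\dots,n_L=1$; $f^{(0)}(x)=x$, $f^{(\ell)}(x)=\rho(A^{(\ell)}f^{(\ell-1)}(x)+b^{(\ell)})$ for $\ell=1,\dots,L-1$ (componentwise $\rho$), $f_\theta=A^{(L)}f^{(L-1)}+b^{(L)}$, with $A^{(\ell)}\in\mathbb{R}^{n_\ell\times n_{\ell-1}}$, $b^{(\ell)}\in\mathbb{R}^{n_\ell}$; $\theta$ is the vector of all parameters (entries of all $A^{(\ell)},b^{(\ell)}$), $\boldsymbol n_L$ its number of (nonzero) entries; $\mathcal{N}_\rho(L,\boldsymbol n_L,R)$ is the class of such networks with all parameters bounded in absolute value by $R$. $\pi_i=\prod_{j=1}^in_j$. $\rho$ is $\tanh$ or the sigmoid $1/(1+e^{-t})$. *)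

theory Defs
  imports "HOL-Analysis.Analysis"
begin

datatype activation = Sigmoid | Tanh

definition sigmoid :: "real \<Rightarrow> real" where
  "sigmoid t = 1 / (1 + exp (- t))"

fun act :: "activation \<Rightarrow> real \<Rightarrow> real" where
  "act Sigmoid t = sigmoid t"
| "act Tanh t = tanh t"

fun eta :: "activation \<Rightarrow> real" where
  "eta Sigmoid = 1"
| "eta Tanh = 2"

text \<open>Widths: n :: nat => nat, with n 0 = d and n L = 1.
  Weights A l i j (layer l, row i < n l, column j < n (l-1)), biases b l i (i < n l).
  Vectors are functions nat => real (only the first n l components matter).\<close>

fun hidden :: "activation \<Rightarrow> (nat \<Rightarrow> nat) \<Rightarrow> (nat \<Rightarrow> nat \<Rightarrow> nat \<Rightarrow> real)
    \<Rightarrow> (nat \<Rightarrow> nat \<Rightarrow> real) \<Rightarrow> (nat \<Rightarrow> real) \<Rightarrow> nat \<Rightarrow> (nat \<Rightarrow> real)" where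
  "hidden \<rho> n A b x 0 = x"
| "hidden \<rho> n A b x (Suc l) =
     (\<lambda>i. act \<rho> ((\<Sum>j<n l. A (Suc l) i j * hidden \<rho> n A b x l j) + b (Suc l) i))"

definition net :: "activation \<Rightarrow> nat \<Rightarrow> (nat \<Rightarrow> nat) \<Rightarrow> (nat \<Rightarrow> nat \<Rightarrow> nat \<Rightarrow> real)
    \<Rightarrow> (nat \<Rightarrow> nat \<Rightarrow> real) \<Rightarrow> (nat \<Rightarrow> real) \<Rightarrow> real" where
  "net \<rho> L n A b x =
     (\<Sum>j<n (L - 1). A L 0 j * hidden \<rho> n A b x (L - 1) j) + b L 0"

definition params_bounded :: "nat \<Rightarrow> (nat \<Rightarrow> nat) \<Rightarrow> real \<Rightarrow> (nat \<Rightarrow> nat \<Rightarrow> nat \<Rightarrow> real)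
    \<Rightarrow> (nat \<Rightarrow> nat \<Rightarrow> real) \<Rightarrow> bool" where
  "params_bounded L n R A b \<longleftrightarrow>
     (\<forall>l\<in>{1..L}. (\<forall>i<n l. \<forall>j<n (l - 1). \<bar>A l i j\<bar> \<le> R) \<and> (\<forall>i<n l. \<bar>b l i\<bar> \<le> R))"

definition nparams :: "nat \<Rightarrow> (nat \<Rightarrow> nat) \<Rightarrow> nat" where
  "nparams L n = (\<Sum>l=1..L. n l * n (l - 1) + n l)"

definition param_dist :: "nat \<Rightarrow> (nat \<Rightarrow> nat) \<Rightarrow> (nat \<Rightarrow> nat \<Rightarrow> nat \<Rightarrow> real) \<Rightarrow> (nat \<Rightarrow> nat \<Rightarrow> real)
    \<Rightarrow> (nat \<Rightarrow> nat \<Rightarrow> nat \<Rightarrow> real) \<Rightarrow> (nat \<Rightarrow> nat \<Rightarrow> real) \<Rightarrow> real" where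
  "param_dist L n A b A' b' =
     sqrt (\<Sum>l=1..L. (\<Sum>i<n l. \<Sum>j<n (l - 1). (A l i j - A' l i j)\<^sup>2)
                    + (\<Sum>i<n l. (b l i - b' l i)\<^sup>2))"

definition piw :: "(nat \<Rightarrow> nat) \<Rightarrow> nat \<Rightarrow> nat" where
  "piw n i = (\<Prod>j=1..i. n j)"

end

theory Submission
  imports Defs
begin

(* Differentiating along the coordinate line t \<mapsto> x(p := t), the first and second
   derivatives of the pre-activations obey forward recursions through the layers
   (chain rule and its second-order form). By induction over the layers, these
   derivatives grow at most by a factor R n_l per layer, and their deviation between
   two parameter sets is bounded by the l1 distance of the parameters of the layers
   seen so far, since the activation and its first two derivatives are bounded and
   Lipschitz. Cauchy-Schwarz turns the l1 distance into sqrt N times the l2 distance. *)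

section \<open>The activation functions\<close>

fun act_deriv :: "activation \<Rightarrow> real \<Rightarrow> real" where
  "act_deriv Sigmoid t = sigmoid t * (1 - sigmoid t)"
| "act_deriv Tanh t = 1 - (tanh t)\<^sup>2"

fun act_deriv2 :: "activation \<Rightarrow> real \<Rightarrow> real" where
  "act_deriv2 Sigmoid t = sigmoid t * (1 - sigmoid t) * (1 - 2 * sigmoid t)"
| "act_deriv2 Tanh t = -2 * tanh t * (1 - (tanh t)\<^sup>2)"

fun act_deriv3 :: "activation \<Rightarrow> real \<Rightarrow> real" where
  "act_deriv3 Sigmoid t = sigmoid t * (1 - sigmoid t) * (1 - 6 * sigmoid t + 6 * (sigmoid t)\<^sup>2)"
| "act_deriv3 Tanh t = (1 - (tanh t)\<^sup>2) * (6 * (tanh t)\<^sup>2 - 2)"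

fun deriv2_max :: "activation \<Rightarrow> real" where
  "deriv2_max Sigmoid = 1/4"
| "deriv2_max Tanh = 1"

fun deriv3_max :: "activation \<Rightarrow> real" where
  "deriv3_max Sigmoid = 1/4"
| "deriv3_max Tanh = 2"

lemma sigmoid_gt_0: "0 < sigmoid t" and sigmoid_less_1: "sigmoid t < 1"
  unfolding sigmoid_def by (auto simp: add_pos_pos)

lemma DERIV_sigmoid: "(sigmoid has_real_derivative sigmoid t * (1 - sigmoid t)) (at t)"
proof -
  have pos: "0 < 1 + exp (- t)"
    by (simp add: add_pos_pos)
  have "((\<lambda>t. 1 / (1 + exp (- t))) has_real_derivative exp (- t) / (1 + exp (- t))\<^sup>2) (at t)"
    using pos by (auto intro!: derivative_eq_intros simp: power2_eq_square)
  moreover have "exp (- t) / (1 + exp (- t))\<^sup>2 = sigmoid t * (1 - sigmoid t)"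
    using pos by (simp add: sigmoid_def divide_simps power2_eq_square)
  ultimately show ?thesis
    unfolding sigmoid_def[abs_def] by simp
qed

lemma DERIV_tanh_real: "(tanh has_real_derivative 1 - (tanh t)\<^sup>2) (at t)"
  using has_field_derivative_tanh[OF _ DERIV_ident, of t] by simp

lemmas DERIV_sigmoid_chain = DERIV_sigmoid[THEN DERIV_chain2]
lemmas DERIV_tanh_chain = DERIV_tanh_real[THEN DERIV_chain2]

lemma act_Sigmoid: "act Sigmoid = sigmoid" and act_Tanh: "act Tanh = tanh"
  by (simp_all add: fun_eq_iff)

lemma DERIV_act: "(act \<rho> has_real_derivative act_deriv \<rho> t) (at t)"
  by (cases \<rho>) (simp_all add: act_Sigmoid act_Tanh DERIV_sigmoid DERIV_tanh_real)

lemma DERIV_act_deriv: "(act_deriv \<rho> has_real_derivative act_deriv2 \<rho> t) (at t)"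
proof (cases \<rho>)
  case Sigmoid
  then have "act_deriv \<rho> = (\<lambda>t. sigmoid t * (1 - sigmoid t))"
    by (simp add: fun_eq_iff)
  then show ?thesis
    using Sigmoid by (auto intro!: derivative_eq_intros DERIV_sigmoid_chain simp: algebra_simps)
next
  case Tanh
  then have "act_deriv \<rho> = (\<lambda>t. 1 - (tanh t)\<^sup>2)"
    by (simp add: fun_eq_iff)
  then show ?thesis
    using Tanh by (auto intro!: derivative_eq_intros DERIV_tanh_chain simp: algebra_simps)
qed

lemma DERIV_act_deriv2: "(act_deriv2 \<rho> has_real_derivative act_deriv3 \<rho> t) (at t)"
proof (cases \<rho>)
  case Sigmoid
  then have "act_deriv2 \<rho> = (\<lambda>t. sigmoid t * (1 - sigmoid t) * (1 - 2 * sigmoid t))"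
    by (simp add: fun_eq_iff)
  then show ?thesis
    using Sigmoid
    by (auto intro!: derivative_eq_intros DERIV_sigmoid_chain simp: algebra_simps power2_eq_square)
next
  case Tanh
  then have "act_deriv2 \<rho> = (\<lambda>t. -2 * tanh t * (1 - (tanh t)\<^sup>2))"
    by (simp add: fun_eq_iff)
  then show ?thesis
    using Tanh
    by (auto intro!: derivative_eq_intros DERIV_tanh_chain simp: algebra_simps power2_eq_square)
qed

lemma abs_act_le_1: "\<bar>act \<rho> t\<bar> \<le> 1"
  using sigmoid_gt_0[of t] sigmoid_less_1[of t] tanh_real_bounds[of t] by (cases \<rho>) auto

lemma mult_one_minus_le_quarter: "(s::real) * (1 - s) \<le> 1/4"
proof -
  have "0 \<le> (s - 1/2)\<^sup>2" by simp
  then show ?thesis by (simp add: power2_eq_square algebra_simps)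
qed

lemma abs_act_deriv_le_1: "\<bar>act_deriv \<rho> t\<bar> \<le> 1"
proof (cases \<rho>)
  case Sigmoid
  then show ?thesis
    using sigmoid_gt_0[of t] sigmoid_less_1[of t] mult_one_minus_le_quarter[of "sigmoid t"] by simp
next
  case Tanh
  have "(tanh t)\<^sup>2 < 1"
    using tanh_real_bounds[of t] by (simp add: abs_square_less_1 abs_less_iff)
  then show ?thesis using Tanh by simp
qed

lemma abs_act_deriv2_le: "\<bar>act_deriv2 \<rho> t\<bar> \<le> deriv2_max \<rho>"
proof (cases \<rho>)
  case Sigmoid
  define s where "s = sigmoid t"
  have s: "0 < s" "s < 1"
    using sigmoid_gt_0 sigmoid_less_1 by (auto simp: s_def)
  have "\<bar>s * (1 - s) * (1 - 2 * s)\<bar> \<le> 1/4 * 1"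
    unfolding abs_mult using s mult_one_minus_le_quarter[of s] by (intro mult_mono) auto
  then show ?thesis using Sigmoid by (simp add: s_def)
next
  case Tanh
  define u where "u = tanh t"
  define a where "a = \<bar>u\<bar>"
  have a: "0 \<le> a" "a < 1"
    using tanh_real_bounds[of t] by (auto simp: a_def u_def)
  have "0 \<le> 1 - u\<^sup>2"
    using a by (simp add: a_def abs_square_less_1 less_imp_le)
  then have "\<bar>act_deriv2 \<rho> t\<bar> = 2 * a * (1 - a\<^sup>2)"
    using Tanh by (simp add: u_def a_def abs_mult power2_abs)
  also have "\<dots> \<le> 1"
  proof -
    (* 1 - 2a + 2a^3 = 2a (a - 3/5)^2 + 12/5 (a - 17/30)^2 + 86/375 *)
    have "0 \<le> 2 * a * (a - 3/5)\<^sup>2" "0 \<le> (a - 17/30)\<^sup>2"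
      using a by simp_all
    then show ?thesis
      by (simp add: power2_eq_square algebra_simps)
  qed
  finally show ?thesis using Tanh by simp
qed

lemma abs_act_deriv3_le: "\<bar>act_deriv3 \<rho> t\<bar> \<le> deriv3_max \<rho>"
proof (cases \<rho>)
  case Sigmoid
  define q where "q = sigmoid t * (1 - sigmoid t)"
  have q: "0 \<le> q" "q \<le> 1/4"
    using sigmoid_gt_0[of t] sigmoid_less_1[of t] mult_one_minus_le_quarter
    by (auto simp: q_def)
  have "act_deriv3 \<rho> t = q * (1 - 6 * q)"
    using Sigmoid by (simp add: q_def power2_eq_square algebra_simps)
  moreover have "\<bar>q * (1 - 6 * q)\<bar> \<le> 1/4 * 1"
    unfolding abs_mult using q by (intro mult_mono) auto
  ultimately show ?thesis
    using Sigmoid by simp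
next
  case Tanh
  define v where "v = (tanh t)\<^sup>2"
  have v: "0 \<le> v" "v < 1"
    using tanh_real_bounds[of t] by (auto simp: v_def abs_square_less_1 abs_less_iff)
  have "act_deriv3 \<rho> t = 8 * v - 6 * v\<^sup>2 - 2"
    using Tanh by (simp add: v_def power2_eq_square algebra_simps)
  moreover have "0 \<le> (v - 2/3)\<^sup>2" "0 \<le> v * (8 - 6 * v)"
    using v by simp_all
  ultimately show ?thesis
    using Tanh by (simp add: abs_le_iff power2_eq_square algebra_simps)
qed

lemma deriv2_max_le_1: "deriv2_max \<rho> \<le> 1"
  and deriv2_max_nonneg: "0 \<le> deriv2_max \<rho>"
  and deriv3_max_nonneg: "0 \<le> deriv3_max \<rho>"
  by (cases \<rho>; simp)+

lemma lipschitz_from_deriv_bound: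
  fixes f f' :: "real \<Rightarrow> real"
  assumes "\<And>t. (f has_real_derivative f' t) (at t)" and "\<And>t. \<bar>f' t\<bar> \<le> M"
  shows "\<bar>f s - f t\<bar> \<le> M * \<bar>s - t\<bar>"
  using field_differentiable_bound[of UNIV f f' M s t] assms by auto

lemma act_lipschitz: "\<bar>act \<rho> s - act \<rho> t\<bar> \<le> \<bar>s - t\<bar>"
  using lipschitz_from_deriv_bound[OF DERIV_act abs_act_deriv_le_1] by simp

lemma act_deriv_lipschitz: "\<bar>act_deriv \<rho> s - act_deriv \<rho> t\<bar> \<le> deriv2_max \<rho> * \<bar>s - t\<bar>"
  using lipschitz_from_deriv_bound[OF DERIV_act_deriv abs_act_deriv2_le] .

lemma act_deriv2_lipschitz: "\<bar>act_deriv2 \<rho> s - act_deriv2 \<rho> t\<bar> \<le> deriv3_max \<rho> * \<bar>s - t\<bar>"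
  using lipschitz_from_deriv_bound[OF DERIV_act_deriv2 abs_act_deriv3_le] .

(* (act o z)'' = chain2 \<rho> z z' z'' *)
definition chain2 :: "activation \<Rightarrow> real \<Rightarrow> real \<Rightarrow> real \<Rightarrow> real" where
  "chain2 \<rho> z u v = act_deriv2 \<rho> z * u\<^sup>2 + act_deriv \<rho> z * v"

lemma abs_chain2_le:
  assumes "\<bar>u\<bar> \<le> Bu" and "\<bar>v\<bar> \<le> Bv"
  shows "\<bar>chain2 \<rho> z u v\<bar> \<le> Bu\<^sup>2 + Bv"
proof -
  have "\<bar>u\<^sup>2\<bar> \<le> Bu\<^sup>2"
    using power_mono[OF assms(1) abs_ge_zero, of 2] by simp
  then have "\<bar>act_deriv2 \<rho> z * u\<^sup>2\<bar> \<le> 1 * Bu\<^sup>2"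
    unfolding abs_mult using abs_act_deriv2_le[of \<rho> z] deriv2_max_le_1[of \<rho>]
    by (intro mult_mono) auto
  moreover have "\<bar>act_deriv \<rho> z * v\<bar> \<le> 1 * Bv"
    unfolding abs_mult using abs_act_deriv_le_1 assms(2) by (intro mult_mono) auto
  ultimately show ?thesis
    unfolding chain2_def by linarith
qed

lemma act_deriv_mult_diff_le:
  assumes "\<bar>z - z'\<bar> \<le> e" and "\<bar>u\<bar> \<le> Bu" and "\<bar>u - u'\<bar> \<le> eu"
  shows "\<bar>act_deriv \<rho> z * u - act_deriv \<rho> z' * u'\<bar> \<le> deriv2_max \<rho> * e * Bu + eu"
proof -
  have "\<bar>act_deriv \<rho> z - act_deriv \<rho> z'\<bar> \<le> deriv2_max \<rho> * e"
    using act_deriv_lipschitz[of \<rho> z z'] assms(1) deriv2_max_nonneg[of \<rho>]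
    by (meson mult_left_mono order_trans)
  then have "\<bar>(act_deriv \<rho> z - act_deriv \<rho> z') * u\<bar> \<le> deriv2_max \<rho> * e * Bu"
    unfolding abs_mult using assms(2) by (intro mult_mono) auto
  moreover have "\<bar>act_deriv \<rho> z' * (u - u')\<bar> \<le> 1 * eu"
    unfolding abs_mult using abs_act_deriv_le_1 assms(3) by (intro mult_mono) auto
  moreover have "act_deriv \<rho> z * u - act_deriv \<rho> z' * u'
      = (act_deriv \<rho> z - act_deriv \<rho> z') * u + act_deriv \<rho> z' * (u - u')"
    by (simp add: algebra_simps)
  ultimately show ?thesis
    by linarith
qed

lemma chain2_diff_le:
  assumes "\<bar>z - z'\<bar> \<le> e" and "\<bar>u\<bar> \<le> Bu" and "\<bar>u'\<bar> \<le> Bu" and "\<bar>u - u'\<bar> \<le> eu"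
    and "\<bar>v\<bar> \<le> Bv" and "\<bar>v - v'\<bar> \<le> ev"
  shows "\<bar>chain2 \<rho> z u v - chain2 \<rho> z' u' v'\<bar>
     \<le> deriv3_max \<rho> * e * Bu\<^sup>2 + deriv2_max \<rho> * eu * (2 * Bu) + deriv2_max \<rho> * e * Bv + ev"
proof -
  have "\<bar>act_deriv2 \<rho> z - act_deriv2 \<rho> z'\<bar> \<le> deriv3_max \<rho> * e"
    using act_deriv2_lipschitz[of \<rho> z z'] assms(1) deriv3_max_nonneg[of \<rho>]
    by (meson mult_left_mono order_trans)
  moreover have "\<bar>u\<^sup>2\<bar> \<le> Bu\<^sup>2"
    using power_mono[OF assms(2) abs_ge_zero, of 2] by simp
  ultimately have 1: "\<bar>(act_deriv2 \<rho> z - act_deriv2 \<rho> z') * u\<^sup>2\<bar> \<le> deriv3_max \<rho> * e * Bu\<^sup>2"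
    unfolding abs_mult by (intro mult_mono) auto
  have "\<bar>(u - u') * (u + u')\<bar> \<le> eu * (2 * Bu)"
    unfolding abs_mult using assms(2-4) by (intro mult_mono) auto
  then have 2: "\<bar>act_deriv2 \<rho> z' * ((u - u') * (u + u'))\<bar> \<le> deriv2_max \<rho> * eu * (2 * Bu)"
    unfolding abs_mult[of "act_deriv2 \<rho> z'"] using abs_act_deriv2_le[of \<rho> z']
    by (simp only: mult.assoc) (intro mult_mono; simp)
  have 3: "\<bar>(act_deriv \<rho> z - act_deriv \<rho> z') * v\<bar> \<le> deriv2_max \<rho> * e * Bv"
    using act_deriv_mult_diff_le[where u=v and u'=v and Bu=Bv and eu=0 and \<rho>=\<rho>, OF assms(1,5)]
    by (simp add: algebra_simps)
  have 4: "\<bar>act_deriv \<rho> z' * (v - v')\<bar> \<le> 1 * ev"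
    unfolding abs_mult using abs_act_deriv_le_1 assms(6) by (intro mult_mono) auto
  have "chain2 \<rho> z u v - chain2 \<rho> z' u' v'
    = (act_deriv2 \<rho> z - act_deriv2 \<rho> z') * u\<^sup>2 + act_deriv2 \<rho> z' * ((u - u') * (u + u'))
      + (act_deriv \<rho> z - act_deriv \<rho> z') * v + act_deriv \<rho> z' * (v - v')"
    by (simp add: chain2_def algebra_simps power2_eq_square)
  with 1 2 3 4 show ?thesis
    by linarith
qed

lemma eta_ge_1: "1 \<le> eta \<rho>"
  by (cases \<rho>) simp_all

(* The per-layer increment of the constant 2 l (l + 1) eta in preact_diff_bounded. *)
lemma eta_step:
  "real l + 1 + deriv3_max \<rho> + deriv2_max \<rho> * (3 * real l + 2) + 2 * real l * (real l + 1) * eta \<rho>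
     \<le> 2 * (real l + 1) * (real l + 2) * eta \<rho>"
  by (cases \<rho>) (simp_all add: algebra_simps)

section \<open>Forward-mode derivatives of the network\<close>

definition preact :: "activation \<Rightarrow> (nat \<Rightarrow> nat) \<Rightarrow> (nat \<Rightarrow> nat \<Rightarrow> nat \<Rightarrow> real)
    \<Rightarrow> (nat \<Rightarrow> nat \<Rightarrow> real) \<Rightarrow> (nat \<Rightarrow> real) \<Rightarrow> nat \<Rightarrow> nat \<Rightarrow> real" where
  "preact \<rho> n A b x l i = (\<Sum>j<n l. A (Suc l) i j * hidden \<rho> n A b x l j) + b (Suc l) i"

lemma hidden_Suc_preact: "hidden \<rho> n A b x (Suc l) i = act \<rho> (preact \<rho> n A b x l i)"
  by (simp add: preact_def)

lemma net_eq_preact: "1 \<le> L \<Longrightarrow> net \<rho> L n A b x = preact \<rho> n A b x (L - 1) 0"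
  by (simp add: net_def preact_def)

fun hidden_deriv :: "activation \<Rightarrow> (nat \<Rightarrow> nat) \<Rightarrow> (nat \<Rightarrow> nat \<Rightarrow> nat \<Rightarrow> real)
    \<Rightarrow> (nat \<Rightarrow> nat \<Rightarrow> real) \<Rightarrow> (nat \<Rightarrow> real) \<Rightarrow> nat \<Rightarrow> nat \<Rightarrow> nat \<Rightarrow> real" where
  "hidden_deriv \<rho> n A b x p 0 j = (if j = p then 1 else 0)"
| "hidden_deriv \<rho> n A b x p (Suc l) i =
     act_deriv \<rho> (preact \<rho> n A b x l i) * (\<Sum>j<n l. A (Suc l) i j * hidden_deriv \<rho> n A b x p l j)"

definition preact_deriv :: "activation \<Rightarrow> (nat \<Rightarrow> nat) \<Rightarrow> (nat \<Rightarrow> nat \<Rightarrow> nat \<Rightarrow> real)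
    \<Rightarrow> (nat \<Rightarrow> nat \<Rightarrow> real) \<Rightarrow> (nat \<Rightarrow> real) \<Rightarrow> nat \<Rightarrow> nat \<Rightarrow> nat \<Rightarrow> real" where
  "preact_deriv \<rho> n A b x p l i = (\<Sum>j<n l. A (Suc l) i j * hidden_deriv \<rho> n A b x p l j)"

lemma hidden_deriv_Suc:
  "hidden_deriv \<rho> n A b x p (Suc l) i = act_deriv \<rho> (preact \<rho> n A b x l i) * preact_deriv \<rho> n A b x p l i"
  by (simp add: preact_deriv_def)

fun hidden_deriv2 :: "activation \<Rightarrow> (nat \<Rightarrow> nat) \<Rightarrow> (nat \<Rightarrow> nat \<Rightarrow> nat \<Rightarrow> real)
    \<Rightarrow> (nat \<Rightarrow> nat \<Rightarrow> real) \<Rightarrow> (nat \<Rightarrow> real) \<Rightarrow> nat \<Rightarrow> nat \<Rightarrow> nat \<Rightarrow> real" where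
  "hidden_deriv2 \<rho> n A b x p 0 j = 0"
| "hidden_deriv2 \<rho> n A b x p (Suc l) i =
     chain2 \<rho> (preact \<rho> n A b x l i) (preact_deriv \<rho> n A b x p l i)
       (\<Sum>j<n l. A (Suc l) i j * hidden_deriv2 \<rho> n A b x p l j)"

definition preact_deriv2 :: "activation \<Rightarrow> (nat \<Rightarrow> nat) \<Rightarrow> (nat \<Rightarrow> nat \<Rightarrow> nat \<Rightarrow> real)
    \<Rightarrow> (nat \<Rightarrow> nat \<Rightarrow> real) \<Rightarrow> (nat \<Rightarrow> real) \<Rightarrow> nat \<Rightarrow> nat \<Rightarrow> nat \<Rightarrow> real" where
  "preact_deriv2 \<rho> n A b x p l i = (\<Sum>j<n l. A (Suc l) i j * hidden_deriv2 \<rho> n A b x p l j)"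

lemma hidden_deriv2_Suc:
  "hidden_deriv2 \<rho> n A b x p (Suc l) i =
     chain2 \<rho> (preact \<rho> n A b x l i) (preact_deriv \<rho> n A b x p l i) (preact_deriv2 \<rho> n A b x p l i)"
  by (simp add: preact_deriv2_def)

declare hidden_deriv.simps(2) [simp del] hidden_deriv2.simps(2) [simp del]

lemma DERIV_preact_of_hidden:
  assumes "\<And>j. ((\<lambda>t. hidden \<rho> n A b (x(p := t)) l j) has_real_derivative h' j) (at s)"
  shows "((\<lambda>t. preact \<rho> n A b (x(p := t)) l i) has_real_derivative
           (\<Sum>j<n l. A (Suc l) i j * h' j)) (at s)"
  unfolding preact_def
  using DERIV_add[OF DERIV_sum[OF DERIV_cmult[OF assms]] DERIV_const] by simp

lemma DERIV_hidden:
  "((\<lambda>t. hidden \<rho> n A b (x(p := t)) l i) has_real_derivative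
      hidden_deriv \<rho> n A b (x(p := s)) p l i) (at s)"
proof (induction l arbitrary: i)
  case 0
  show ?case
    by (cases "i = p") auto
next
  case (Suc l)
  show ?case
    unfolding hidden_Suc_preact hidden_deriv_Suc preact_deriv_def
    by (rule DERIV_chain2[OF DERIV_act DERIV_preact_of_hidden[OF Suc.IH]])
qed

lemma DERIV_preact:
  "((\<lambda>t. preact \<rho> n A b (x(p := t)) l i) has_real_derivative
      preact_deriv \<rho> n A b (x(p := s)) p l i) (at s)"
  unfolding preact_deriv_def by (rule DERIV_preact_of_hidden[OF DERIV_hidden])

lemma DERIV_hidden_deriv:
  "((\<lambda>t. hidden_deriv \<rho> n A b (x(p := t)) p l i) has_real_derivative
      hidden_deriv2 \<rho> n A b (x(p := s)) p l i) (at s)"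
proof (induction l arbitrary: i)
  case 0
  show ?case
    by simp
next
  case (Suc l)
  have "((\<lambda>t. preact_deriv \<rho> n A b (x(p := t)) p l i) has_real_derivative
      preact_deriv2 \<rho> n A b (x(p := s)) p l i) (at s)"
    unfolding preact_deriv_def preact_deriv2_def by (intro DERIV_sum DERIV_cmult Suc.IH)
  then show ?case
    unfolding hidden_deriv_Suc hidden_deriv2_Suc chain2_def
    by (auto intro!: derivative_eq_intros DERIV_chain2[OF DERIV_act_deriv DERIV_preact]
        simp: power2_eq_square algebra_simps)
qed

lemma deriv2_preact:
  "deriv (deriv (\<lambda>t. preact \<rho> n A b (x(p := t)) l i)) (x p) = preact_deriv2 \<rho> n A b x p l i"
proof -
  have "deriv (\<lambda>t. preact \<rho> n A b (x(p := t)) l i) = (\<lambda>s. preact_deriv \<rho> n A b (x(p := s)) p l i)"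
    using DERIV_preact by (auto intro!: DERIV_imp_deriv)
  moreover have "((\<lambda>s. preact_deriv \<rho> n A b (x(p := s)) p l i) has_real_derivative
      preact_deriv2 \<rho> n A b (x(p := x p)) p l i) (at (x p))"
    unfolding preact_deriv_def preact_deriv2_def by (intro DERIV_sum DERIV_cmult DERIV_hidden_deriv)
  ultimately show ?thesis
    by (simp add: DERIV_imp_deriv)
qed

section \<open>Parameter distances\<close>

definition row_l1_dist :: "(nat \<Rightarrow> nat) \<Rightarrow> (nat \<Rightarrow> nat \<Rightarrow> nat \<Rightarrow> real) \<Rightarrow> (nat \<Rightarrow> nat \<Rightarrow> real)
    \<Rightarrow> (nat \<Rightarrow> nat \<Rightarrow> nat \<Rightarrow> real) \<Rightarrow> (nat \<Rightarrow> nat \<Rightarrow> real) \<Rightarrow> nat \<Rightarrow> nat \<Rightarrow> real" where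
  "row_l1_dist n A b A' b' k i = (\<Sum>j<n (k - 1). \<bar>A k i j - A' k i j\<bar>) + \<bar>b k i - b' k i\<bar>"

definition layer_l1_dist :: "(nat \<Rightarrow> nat) \<Rightarrow> (nat \<Rightarrow> nat \<Rightarrow> nat \<Rightarrow> real) \<Rightarrow> (nat \<Rightarrow> nat \<Rightarrow> real)
    \<Rightarrow> (nat \<Rightarrow> nat \<Rightarrow> nat \<Rightarrow> real) \<Rightarrow> (nat \<Rightarrow> nat \<Rightarrow> real) \<Rightarrow> nat \<Rightarrow> real" where
  "layer_l1_dist n A b A' b' k = (\<Sum>i<n k. row_l1_dist n A b A' b' k i)"

definition l1_dist_upto :: "(nat \<Rightarrow> nat) \<Rightarrow> (nat \<Rightarrow> nat \<Rightarrow> nat \<Rightarrow> real) \<Rightarrow> (nat \<Rightarrow> nat \<Rightarrow> real)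
    \<Rightarrow> (nat \<Rightarrow> nat \<Rightarrow> nat \<Rightarrow> real) \<Rightarrow> (nat \<Rightarrow> nat \<Rightarrow> real) \<Rightarrow> nat \<Rightarrow> real" where
  "l1_dist_upto n A b A' b' l = (\<Sum>k=1..l. layer_l1_dist n A b A' b' k)"

lemma row_l1_dist_nonneg: "0 \<le> row_l1_dist n A b A' b' k i"
  unfolding row_l1_dist_def by (simp add: sum_nonneg)

lemma layer_l1_dist_nonneg: "0 \<le> layer_l1_dist n A b A' b' k"
  unfolding layer_l1_dist_def by (simp add: sum_nonneg row_l1_dist_nonneg)

lemma l1_dist_upto_nonneg: "0 \<le> l1_dist_upto n A b A' b' l"
  unfolding l1_dist_upto_def by (simp add: sum_nonneg layer_l1_dist_nonneg)

lemma row_le_layer_l1_dist: "i < n k \<Longrightarrow> row_l1_dist n A b A' b' k i \<le> layer_l1_dist n A b A' b' k"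
  unfolding layer_l1_dist_def by (rule member_le_sum) (auto intro: row_l1_dist_nonneg)

lemma l1_dist_upto_Suc:
  "l1_dist_upto n A b A' b' (Suc l) = l1_dist_upto n A b A' b' l + layer_l1_dist n A b A' b' (Suc l)"
  unfolding l1_dist_upto_def by simp

lemma sum_sqrt_mult_le:
  fixes c g :: "'a \<Rightarrow> real"
  assumes "\<And>i. i \<in> I \<Longrightarrow> 0 \<le> c i" and "\<And>i. i \<in> I \<Longrightarrow> 0 \<le> g i"
  shows "(\<Sum>i\<in>I. sqrt (c i) * sqrt (g i)) \<le> sqrt (\<Sum>i\<in>I. c i) * sqrt (\<Sum>i\<in>I. g i)"
proof -
  have "(\<Sum>i\<in>I. sqrt (c i) * sqrt (g i))\<^sup>2 \<le> (\<Sum>i\<in>I. c i) * (\<Sum>i\<in>I. g i)"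
    using Cauchy_Schwarz_ineq_sum[of "\<lambda>i. sqrt (c i)" "\<lambda>i. sqrt (g i)" I] assms by simp
  then show ?thesis
    by (metis real_le_rsqrt real_sqrt_mult)
qed

lemma sqrt_mult_add_le: "0 \<le> a \<Longrightarrow> 0 \<le> b \<Longrightarrow> 0 \<le> c \<Longrightarrow> 0 \<le> d \<Longrightarrow>
    sqrt a * sqrt b + sqrt c * sqrt d \<le> sqrt (a + c) * sqrt (b + d)"
  using sum_sqrt_mult_le[of "{False, True}" "\<lambda>i. if i then a else c" "\<lambda>i. if i then b else d"]
  by (simp add: add.commute)

lemma row_l1_dist_le:
  "row_l1_dist n A b A' b' k i \<le> sqrt (real (n (k - 1)) + 1) *
     sqrt ((\<Sum>j<n (k - 1). (A k i j - A' k i j)\<^sup>2) + (b k i - b' k i)\<^sup>2)"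
proof -
  have "(\<Sum>j<n (k - 1). \<bar>A k i j - A' k i j\<bar>) \<le> sqrt (real (n (k - 1))) * sqrt (\<Sum>j<n (k - 1). (A k i j - A' k i j)\<^sup>2)"
    using sum_sqrt_mult_le[of "{..<n (k - 1)}" "\<lambda>_. 1" "\<lambda>j. (A k i j - A' k i j)\<^sup>2"] by simp
  then show ?thesis
    unfolding row_l1_dist_def
    using sqrt_mult_add_le[of "real (n (k - 1))" "\<Sum>j<n (k - 1). (A k i j - A' k i j)\<^sup>2" 1 "(b k i - b' k i)\<^sup>2"]
    by (simp add: sum_nonneg)
qed

lemma l1_dist_upto_le_param_dist:
  "l1_dist_upto n A b A' b' L \<le> sqrt (real (nparams L n)) * param_dist L n A b A' b'"
proof -
  define Q where "Q k = (\<Sum>i<n k. (\<Sum>j<n (k - 1). (A k i j - A' k i j)\<^sup>2) + (b k i - b' k i)\<^sup>2)" for k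
  have Q_nonneg: "0 \<le> Q k" for k
    unfolding Q_def by (simp add: sum_nonneg)
  have layer: "layer_l1_dist n A b A' b' k \<le> sqrt (real (n k * n (k - 1) + n k)) * sqrt (Q k)" for k
  proof -
    have "layer_l1_dist n A b A' b' k \<le> (\<Sum>i<n k. sqrt (real (n (k - 1)) + 1) *
        sqrt ((\<Sum>j<n (k - 1). (A k i j - A' k i j)\<^sup>2) + (b k i - b' k i)\<^sup>2))"
      unfolding layer_l1_dist_def by (intro sum_mono row_l1_dist_le)
    also have "\<dots> \<le> sqrt (\<Sum>i<n k. real (n (k - 1)) + 1) * sqrt (Q k)"
      unfolding Q_def by (intro sum_sqrt_mult_le) (auto simp: sum_nonneg)
    finally show ?thesis
      by (simp add: algebra_simps)
  qed
  have "l1_dist_upto n A b A' b' L \<le> (\<Sum>k=1..L. sqrt (real (n k * n (k - 1) + n k)) * sqrt (Q k))"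
    unfolding l1_dist_upto_def by (intro sum_mono layer)
  also have "\<dots> \<le> sqrt (\<Sum>k=1..L. real (n k * n (k - 1) + n k)) * sqrt (\<Sum>k=1..L. Q k)"
    by (intro sum_sqrt_mult_le Q_nonneg) simp
  also have "\<dots> = sqrt (real (nparams L n)) * param_dist L n A b A' b'"
    by (simp add: nparams_def param_dist_def Q_def sum.distrib)
  finally show ?thesis .
qed

section \<open>Propagation through one layer\<close>

lemma params_bounded_weight:
  "params_bounded L n R A b \<Longrightarrow> 1 \<le> k \<Longrightarrow> k \<le> L \<Longrightarrow> i < n k \<Longrightarrow> j < n (k - 1) \<Longrightarrow> \<bar>A k i j\<bar> \<le> R"
  unfolding params_bounded_def by auto

definition growth :: "real \<Rightarrow> (nat \<Rightarrow> nat) \<Rightarrow> nat \<Rightarrow> real" where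
  "growth R n l = R ^ l * real (piw n l)"

lemma growth_0 [simp]: "growth R n 0 = 1"
  by (simp add: growth_def piw_def)

lemma growth_Suc: "growth R n (Suc l) = R * real (n (Suc l)) * growth R n l"
  by (simp add: growth_def piw_def)

lemma growth_ge_1: "1 \<le> R \<Longrightarrow> \<forall>k\<le>l. 1 \<le> n k \<Longrightarrow> 1 \<le> growth R n l"
proof (induction l)
  case (Suc l)
  then have "1 * 1 * 1 \<le> R * real (n (Suc l)) * growth R n l"
    by (intro mult_mono) auto
  then show ?case
    by (simp add: growth_Suc)
qed simp

lemma abs_sum_mult_le:
  fixes a u :: "nat \<Rightarrow> real"
  assumes "\<forall>j<m. \<bar>a j\<bar> \<le> R" and "\<forall>j<m. \<bar>u j\<bar> \<le> B"
  shows "\<bar>\<Sum>j<m. a j * u j\<bar> \<le> real m * R * B"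
proof -
  have "\<bar>\<Sum>j<m. a j * u j\<bar> \<le> (\<Sum>j<m. \<bar>a j\<bar> * \<bar>u j\<bar>)"
    using sum_abs[of "\<lambda>j. a j * u j"] by (simp add: abs_mult)
  also have "\<dots> \<le> (\<Sum>j<m. R * B)"
    using assms by (intro sum_mono mult_mono) auto
  finally show ?thesis
    by simp
qed

lemma affine_diff_le:
  fixes a a' u u' :: "nat \<Rightarrow> real"
  assumes "\<forall>j<m. \<bar>a j\<bar> \<le> R" and "\<forall>j<m. \<bar>u' j\<bar> \<le> B" and "\<forall>j<m. \<bar>u j - u' j\<bar> \<le> E"
    and "(\<Sum>j<m. \<bar>a j - a' j\<bar>) + \<bar>c - c'\<bar> \<le> T"
    and "0 \<le> B" and "B \<le> Y" and "1 \<le> Y" and "real m * R * E \<le> Y * U"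
  shows "\<bar>((\<Sum>j<m. a j * u j) + c) - ((\<Sum>j<m. a' j * u' j) + c')\<bar> \<le> Y * (U + T)"
proof -
  have 1: "\<bar>\<Sum>j<m. (a j - a' j) * u' j\<bar> \<le> (\<Sum>j<m. \<bar>a j - a' j\<bar>) * Y"
  proof -
    have "\<bar>\<Sum>j<m. (a j - a' j) * u' j\<bar> \<le> (\<Sum>j<m. \<bar>a j - a' j\<bar> * \<bar>u' j\<bar>)"
      using sum_abs[of "\<lambda>j. (a j - a' j) * u' j"] by (simp add: abs_mult)
    also have "\<dots> \<le> (\<Sum>j<m. \<bar>a j - a' j\<bar> * Y)"
      using assms(2,6) by (intro sum_mono mult_left_mono) auto
    finally show ?thesis
      by (simp add: sum_distrib_right)
  qed
  have 2: "\<bar>c - c'\<bar> \<le> \<bar>c - c'\<bar> * Y"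
    using assms(7) by (simp add: mult_le_cancel_left1)
  have 3: "\<bar>\<Sum>j<m. a j * (u j - u' j)\<bar> \<le> Y * U"
    using abs_sum_mult_le[of m a R "\<lambda>j. u j - u' j" E] assms(1,3,8) by simp
  have 4: "((\<Sum>j<m. a j * u j) + c) - ((\<Sum>j<m. a' j * u' j) + c')
      = (\<Sum>j<m. (a j - a' j) * u' j) + (\<Sum>j<m. a j * (u j - u' j)) + (c - c')"
    by (simp add: algebra_simps sum_subtractf)
  have "((\<Sum>j<m. \<bar>a j - a' j\<bar>) + \<bar>c - c'\<bar>) * Y \<le> T * Y"
    using assms(4,7) by (intro mult_right_mono) auto
  with 1 2 3 4 show ?thesis
    by (simp add: algebra_simps)
qed

lemma growth_step:
  fixes R m F :: real
  assumes "1 \<le> R" and "1 \<le> m" and "1 \<le> F"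
  shows "F \<le> R * m * F" and "R * F \<le> R * m * F" and "1 \<le> R * m * F"
proof -
  have "1 * F \<le> (R * m) * F"
    using assms mult_mono[of 1 R 1 m] by (intro mult_right_mono) auto
  then show "F \<le> R * m * F"
    by simp
  then show "1 \<le> R * m * F"
    using assms(3) by linarith
  show "R * F \<le> R * m * F"
    using assms mult_left_mono[of 1 m "R * F"] by (simp add: algebra_simps)
qed

lemma layer_diff_step:
  fixes a a' u u' :: "nat \<Rightarrow> real"
  assumes a: "\<forall>j<m. \<bar>a j\<bar> \<le> R" and row: "(\<Sum>j<m. \<bar>a j - a' j\<bar>) + \<bar>c - c'\<bar> \<le> T"
    and u': "\<forall>j<m. \<bar>u' j\<bar> \<le> 1" and u: "\<forall>j<m. \<bar>u j - u' j\<bar> \<le> F * U"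
    and R: "1 \<le> R" and m: "1 \<le> real m" and F: "1 \<le> F"
  shows "\<bar>((\<Sum>j<m. a j * u j) + c) - ((\<Sum>j<m. a' j * u' j) + c')\<bar> \<le> R * m * F * (U + T)"
  using affine_diff_le[OF a u' u row _ growth_step(3)[OF R m F] growth_step(3)[OF R m F],
      where U = U] by (simp add: algebra_simps)

lemma layer_deriv_diff_step:
  fixes a a' u u' :: "nat \<Rightarrow> real"
  assumes a: "\<forall>j<m. \<bar>a j\<bar> \<le> R" and row: "(\<Sum>j<m. \<bar>a j - a' j\<bar>) \<le> T"
    and u': "\<forall>j<m. \<bar>u' j\<bar> \<le> R * F" and u: "\<forall>j<m. \<bar>u j - u' j\<bar> \<le> k * R * F\<^sup>2 * U"
    and R: "1 \<le> R" and m: "1 \<le> real m" and F: "1 \<le> F" and U: "0 \<le> U" and k: "1 \<le> k"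
  shows "\<bar>(\<Sum>j<m. a j * u j) - (\<Sum>j<m. a' j * u' j)\<bar> \<le> k * R * (R * m * F)\<^sup>2 * (U + T)"
proof -
  define F' where "F' = R * m * F"
  note F' = growth_step[OF R m F, folded F'_def]
  have "1 \<le> k * R"
    using mult_mono[OF k R] k by simp
  then have "F'\<^sup>2 \<le> k * R * F'\<^sup>2"
    using mult_right_mono[of 1 _ "F'\<^sup>2"] by simp
  moreover have "F' \<le> F'\<^sup>2"
    using F' by (simp add: power2_eq_square)
  ultimately have "R * F \<le> k * R * F'\<^sup>2" and "1 \<le> k * R * F'\<^sup>2"
    using F' by linarith+
  moreover have "real m * R * (k * R * F\<^sup>2 * U) \<le> k * R * F'\<^sup>2 * U"
  proof -
    have "real m * R * (k * R * F\<^sup>2 * U) = (k * R * U) * (F' * F)"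
      by (simp add: F'_def power2_eq_square algebra_simps)
    also have "\<dots> \<le> (k * R * U) * (F' * F')"
      using F' F R U k by (intro mult_left_mono) auto
    finally show ?thesis
      by (simp add: power2_eq_square algebra_simps)
  qed
  moreover have "(\<Sum>j<m. \<bar>a j - a' j\<bar>) + \<bar>0 - 0\<bar> \<le> T"
    using row by simp
  ultimately show ?thesis
    using affine_diff_le[OF a u' u, where c = 0 and c' = 0] R F unfolding F'_def by simp
qed

lemma layer_deriv2_diff_step:
  fixes a a' u u' :: "nat \<Rightarrow> real"
  assumes a: "\<forall>j<m. \<bar>a j\<bar> \<le> R" and row: "(\<Sum>j<m. \<bar>a j - a' j\<bar>) \<le> T"
    and u': "\<forall>j<m. \<bar>u' j\<bar> \<le> k * R\<^sup>2 * F\<^sup>2" and u: "\<forall>j<m. \<bar>u j - u' j\<bar> \<le> C * R\<^sup>2 * F ^ 3 * U"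
    and R: "1 \<le> R" and m: "1 \<le> real m" and F: "1 \<le> F" and U: "0 \<le> U"
    and C: "0 \<le> C" "C \<le> K" and k: "1 \<le> k" "k \<le> K"
  shows "\<bar>(\<Sum>j<m. a j * u j) - (\<Sum>j<m. a' j * u' j)\<bar> \<le> K * (R * m * F) ^ 3 * (U + T)"
proof -
  define F' where "F' = R * m * F"
  note F' = growth_step[OF R m F, folded F'_def]
  have RF_sq: "(R * F)\<^sup>2 \<le> F' ^ 3"
  proof -
    have "(R * F)\<^sup>2 \<le> F'\<^sup>2"
      using F' R F by (intro power_mono) auto
    also have "\<dots> \<le> F' ^ 3"
      using F' by (intro power_increasing) auto
    finally show ?thesis .
  qed
  have "k * R\<^sup>2 * F\<^sup>2 \<le> K * F' ^ 3"
    using k RF_sq mult_mono[of k K "(R * F)\<^sup>2" "F' ^ 3"] by (simp add: power_mult_distrib)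
  moreover have "1 \<le> K * F' ^ 3"
    using k F' mult_mono[of 1 K 1 "F' ^ 3"] by simp
  moreover have "real m * R * (C * R\<^sup>2 * F ^ 3 * U) \<le> K * F' ^ 3 * U"
  proof -
    have "real m * R * (C * R\<^sup>2 * F ^ 3 * U) = (C * U * F') * (R * F)\<^sup>2"
      by (simp add: F'_def power2_eq_square power3_eq_cube algebra_simps)
    also have "\<dots> \<le> (C * U * F') * F'\<^sup>2"
      using F' R F U C by (intro mult_left_mono power_mono) auto
    also have "\<dots> = C * (F' ^ 3 * U)"
      by (simp add: power2_eq_square power3_eq_cube)
    also have "\<dots> \<le> K * (F' ^ 3 * U)"
      using C F' U by (intro mult_right_mono) auto
    finally show ?thesis
      by (simp add: mult.assoc)
  qed
  moreover have "(\<Sum>j<m. \<bar>a j - a' j\<bar>) + \<bar>0 - 0\<bar> \<le> T"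
    using row by simp
  ultimately show ?thesis
    using affine_diff_le[OF a u' u, where c = 0 and c' = 0] k R F unfolding F'_def by simp
qed

section \<open>Layerwise bounds\<close>

definition preact_deriv_bounded :: "activation \<Rightarrow> (nat \<Rightarrow> nat) \<Rightarrow> real \<Rightarrow> (nat \<Rightarrow> nat \<Rightarrow> nat \<Rightarrow> real)
    \<Rightarrow> (nat \<Rightarrow> nat \<Rightarrow> real) \<Rightarrow> (nat \<Rightarrow> real) \<Rightarrow> nat \<Rightarrow> nat \<Rightarrow> bool" where
  "preact_deriv_bounded \<rho> n R A b x p l \<longleftrightarrow> (\<forall>i<n (Suc l).
     \<bar>preact_deriv \<rho> n A b x p l i\<bar> \<le> R * growth R n l \<and>
     \<bar>preact_deriv2 \<rho> n A b x p l i\<bar> \<le> real l * R\<^sup>2 * (growth R n l)\<^sup>2)"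

(* The tangent of the input is the unit vector e_p, so no factor n 0 = d appears. *)
lemma preact_deriv_bounded_0:
  assumes "params_bounded L n R A b" and "1 \<le> L" and "p < n 0"
  shows "preact_deriv_bounded \<rho> n R A b x p 0"
proof -
  have "preact_deriv \<rho> n A b x p 0 i = A 1 i p" for i
    using assms(3) by (simp add: preact_deriv_def if_distrib cong: if_cong)
  moreover have "\<bar>A 1 i p\<bar> \<le> R" if "i < n 1" for i
    using params_bounded_weight[OF assms(1)] assms(2,3) that by simp
  ultimately show ?thesis
    by (simp add: preact_deriv_bounded_def preact_deriv2_def)
qed

lemma hidden_deriv_bounds:
  assumes "preact_deriv_bounded \<rho> n R A b x p l" and "j < n (Suc l)"
  shows "\<bar>hidden_deriv \<rho> n A b x p (Suc l) j\<bar> \<le> R * growth R n l"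
    and "\<bar>hidden_deriv2 \<rho> n A b x p (Suc l) j\<bar> \<le> (real l + 1) * R\<^sup>2 * (growth R n l)\<^sup>2"
proof -
  have "\<bar>hidden_deriv \<rho> n A b x p (Suc l) j\<bar> \<le> 1 * (R * growth R n l)"
    unfolding hidden_deriv_Suc abs_mult using assms
    by (intro mult_mono abs_act_deriv_le_1) (auto simp: preact_deriv_bounded_def)
  then show "\<bar>hidden_deriv \<rho> n A b x p (Suc l) j\<bar> \<le> R * growth R n l"
    by simp
  show "\<bar>hidden_deriv2 \<rho> n A b x p (Suc l) j\<bar> \<le> (real l + 1) * R\<^sup>2 * (growth R n l)\<^sup>2"
    using abs_chain2_le[of _ "R * growth R n l" _ "real l * R\<^sup>2 * (growth R n l)\<^sup>2"] assms
    unfolding preact_deriv_bounded_def hidden_deriv2_Suc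
    by (simp add: power_mult_distrib algebra_simps)
qed

lemma preact_deriv_bounded_Suc:
  assumes R: "1 \<le> R" and bounded: "params_bounded L n R A b" and l: "Suc l < L"
    and widths: "\<forall>k\<le>L. 1 \<le> n k" and IH: "preact_deriv_bounded \<rho> n R A b x p l"
  shows "preact_deriv_bounded \<rho> n R A b x p (Suc l)"
  unfolding preact_deriv_bounded_def
proof (intro allI impI conjI)
  fix i
  assume i: "i < n (Suc (Suc l))"
  define F where "F = growth R n l"
  define m where "m = real (n (Suc l))"
  have F: "1 \<le> F" and m: "1 \<le> m"
    using growth_ge_1[OF R] widths l by (auto simp: F_def m_def)
  have F': "growth R n (Suc l) = R * m * F"
    by (simp add: growth_Suc F_def m_def)
  have weights: "\<forall>j<n (Suc l). \<bar>A (Suc (Suc l)) i j\<bar> \<le> R"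
    using params_bounded_weight[OF bounded] l i by simp
  note hidden_bound = hidden_deriv_bounds[OF IH, folded F_def]
  have "\<bar>preact_deriv \<rho> n A b x p (Suc l) i\<bar> \<le> m * R * (R * F)"
    unfolding preact_deriv_def m_def using weights hidden_bound(1) by (intro abs_sum_mult_le) auto
  then show "\<bar>preact_deriv \<rho> n A b x p (Suc l) i\<bar> \<le> R * growth R n (Suc l)"
    by (simp add: F' algebra_simps)
  have "\<bar>preact_deriv2 \<rho> n A b x p (Suc l) i\<bar> \<le> m * R * ((real l + 1) * R\<^sup>2 * F\<^sup>2)"
    unfolding preact_deriv2_def m_def using weights hidden_bound(2) by (intro abs_sum_mult_le) auto
  also have "\<dots> \<le> (R * m)\<^sup>2 * ((real l + 1) * R\<^sup>2 * F\<^sup>2)"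
  proof (rule mult_right_mono)
    have "1 \<le> R * m"
      using mult_mono[OF R m] R by simp
    then show "m * R \<le> (R * m)\<^sup>2"
      by (simp add: power2_eq_square mult_le_cancel_left1 mult.commute)
  qed simp
  also have "\<dots> = (real l + 1) * R\<^sup>2 * (R * m * F)\<^sup>2"
    by (simp add: power_mult_distrib)
  finally show "\<bar>preact_deriv2 \<rho> n A b x p (Suc l) i\<bar> \<le> real (Suc l) * R\<^sup>2 * (growth R n (Suc l))\<^sup>2"
    by (simp add: F' add.commute)
qed

lemma preact_deriv_bounded:
  assumes "1 \<le> R" and "params_bounded L n R A b" and "\<forall>k\<le>L. 1 \<le> n k" and "p < n 0"
  shows "l < L \<Longrightarrow> preact_deriv_bounded \<rho> n R A b x p l"
proof (induction l)
  case 0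
  then show ?case
    using preact_deriv_bounded_0[OF assms(2) _ assms(4)] by simp
next
  case (Suc l)
  then show ?case
    using preact_deriv_bounded_Suc[OF assms(1,2) _ assms(3)] by simp
qed

definition preact_diff_bounded :: "activation \<Rightarrow> (nat \<Rightarrow> nat) \<Rightarrow> real
    \<Rightarrow> (nat \<Rightarrow> nat \<Rightarrow> nat \<Rightarrow> real) \<Rightarrow> (nat \<Rightarrow> nat \<Rightarrow> real)
    \<Rightarrow> (nat \<Rightarrow> nat \<Rightarrow> nat \<Rightarrow> real) \<Rightarrow> (nat \<Rightarrow> nat \<Rightarrow> real)
    \<Rightarrow> (nat \<Rightarrow> real) \<Rightarrow> nat \<Rightarrow> nat \<Rightarrow> bool" where
  "preact_diff_bounded \<rho> n R A b A' b' x p l \<longleftrightarrow> (\<forall>i<n (Suc l).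
     \<bar>preact \<rho> n A b x l i - preact \<rho> n A' b' x l i\<bar>
       \<le> growth R n l * l1_dist_upto n A b A' b' (Suc l) \<and>
     \<bar>preact_deriv \<rho> n A b x p l i - preact_deriv \<rho> n A' b' x p l i\<bar>
       \<le> (real l + 1) * R * (growth R n l)\<^sup>2 * l1_dist_upto n A b A' b' (Suc l) \<and>
     \<bar>preact_deriv2 \<rho> n A b x p l i - preact_deriv2 \<rho> n A' b' x p l i\<bar>
       \<le> 2 * real l * (real l + 1) * eta \<rho> * growth R n l ^ 3 * l1_dist_upto n A b A' b' (Suc l))"

lemma preact_diff_bounded_0:
  assumes R: "1 \<le> R" and bounded: "params_bounded L n R A b" and L: "1 \<le> L"
    and x: "\<forall>j<n 0. \<bar>x j\<bar> \<le> 1"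
  shows "preact_diff_bounded \<rho> n R A b A' b' x p 0"
  unfolding preact_diff_bounded_def
proof (intro allI impI conjI)
  fix i
  assume i: "i < n (Suc 0)"
  define T where "T = layer_l1_dist n A b A' b' 1"
  have weights: "\<forall>j<n 0. \<bar>A 1 i j\<bar> \<le> R"
    using params_bounded_weight[OF bounded] L i by simp
  have row: "(\<Sum>j<n 0. \<bar>A 1 i j - A' 1 i j\<bar>) + \<bar>b 1 i - b' 1 i\<bar> \<le> T"
    using row_le_layer_l1_dist[of i n 1] i unfolding T_def row_l1_dist_def by simp
  have U: "l1_dist_upto n A b A' b' (Suc 0) = T"
    by (simp add: l1_dist_upto_def T_def)
  show "\<bar>preact \<rho> n A b x 0 i - preact \<rho> n A' b' x 0 i\<bar> \<le> growth R n 0 * l1_dist_upto n A b A' b' (Suc 0)"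
    using affine_diff_le[OF weights _ _ row, where u = x and u' = x and B = 1 and E = 0 and Y = 1
        and U = 0] x
    by (simp add: preact_def U)
  have "(\<Sum>j<n 0. \<bar>A 1 i j - A' 1 i j\<bar>) + \<bar>0 - 0\<bar> \<le> T"
    using row abs_ge_zero[of "b 1 i - b' 1 i"] by linarith
  from affine_diff_le[OF weights _ _ this _ _ R, where u = "hidden_deriv \<rho> n A b x p 0"
      and u' = "hidden_deriv \<rho> n A' b' x p 0" and B = 1 and E = 0 and U = 0]
  have "\<bar>preact_deriv \<rho> n A b x p 0 i - preact_deriv \<rho> n A' b' x p 0 i\<bar> \<le> R * (0 + T)"
    using R by (simp add: preact_deriv_def)
  then show "\<bar>preact_deriv \<rho> n A b x p 0 i - preact_deriv \<rho> n A' b' x p 0 i\<bar>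
      \<le> (real 0 + 1) * R * (growth R n 0)\<^sup>2 * l1_dist_upto n A b A' b' (Suc 0)"
    by (simp add: U)
  show "\<bar>preact_deriv2 \<rho> n A b x p 0 i - preact_deriv2 \<rho> n A' b' x p 0 i\<bar>
      \<le> 2 * real 0 * (real 0 + 1) * eta \<rho> * growth R n 0 ^ 3 * l1_dist_upto n A b A' b' (Suc 0)"
    by (simp add: preact_deriv2_def)
qed

lemma hidden_diff_bounds:
  assumes R: "1 \<le> R" and diff: "preact_diff_bounded \<rho> n R A b A' b' x p l"
    and derivs: "preact_deriv_bounded \<rho> n R A b x p l" and derivs': "preact_deriv_bounded \<rho> n R A' b' x p l"
    and j: "j < n (Suc l)"
  defines "F \<equiv> growth R n l" and "U \<equiv> l1_dist_upto n A b A' b' (Suc l)"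
  shows "\<bar>hidden \<rho> n A b x (Suc l) j - hidden \<rho> n A' b' x (Suc l) j\<bar> \<le> F * U"
    and "\<bar>hidden_deriv \<rho> n A b x p (Suc l) j - hidden_deriv \<rho> n A' b' x p (Suc l) j\<bar>
           \<le> (real l + 2) * R * F\<^sup>2 * U"
    and "\<bar>hidden_deriv2 \<rho> n A b x p (Suc l) j - hidden_deriv2 \<rho> n A' b' x p (Suc l) j\<bar>
           \<le> (deriv3_max \<rho> + deriv2_max \<rho> * (3 * real l + 2) + 2 * real l * (real l + 1) * eta \<rho>)
                * R\<^sup>2 * F ^ 3 * U"
proof -
  note dev = diff[unfolded preact_diff_bounded_def, rule_format, OF j, folded F_def U_def]
  note bound = derivs[unfolded preact_deriv_bounded_def, rule_format, OF j, folded F_def]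
  note bound' = derivs'[unfolded preact_deriv_bounded_def, rule_format, OF j, folded F_def]
  have F: "0 \<le> F" and U: "0 \<le> U"
    using R by (simp_all add: F_def growth_def U_def l1_dist_upto_nonneg)
  show "\<bar>hidden \<rho> n A b x (Suc l) j - hidden \<rho> n A' b' x (Suc l) j\<bar> \<le> F * U"
    unfolding hidden_Suc_preact using order_trans[OF act_lipschitz] dev by blast
  have "\<bar>hidden_deriv \<rho> n A b x p (Suc l) j - hidden_deriv \<rho> n A' b' x p (Suc l) j\<bar>
      \<le> deriv2_max \<rho> * (F * U) * (R * F) + (real l + 1) * R * F\<^sup>2 * U"
    unfolding hidden_deriv_Suc using dev bound by (intro act_deriv_mult_diff_le) auto
  also have "\<dots> \<le> 1 * (F * U) * (R * F) + (real l + 1) * R * F\<^sup>2 * U"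
    using deriv2_max_le_1 F U R by (intro add_right_mono mult_right_mono) auto
  finally show "\<bar>hidden_deriv \<rho> n A b x p (Suc l) j - hidden_deriv \<rho> n A' b' x p (Suc l) j\<bar>
      \<le> (real l + 2) * R * F\<^sup>2 * U"
    by (simp add: power2_eq_square algebra_simps)
  have "\<bar>hidden_deriv2 \<rho> n A b x p (Suc l) j - hidden_deriv2 \<rho> n A' b' x p (Suc l) j\<bar>
      \<le> deriv3_max \<rho> * (F * U) * (R * F)\<^sup>2 + deriv2_max \<rho> * ((real l + 1) * R * F\<^sup>2 * U) * (2 * (R * F))
        + deriv2_max \<rho> * (F * U) * (real l * R\<^sup>2 * F\<^sup>2)
        + 2 * real l * (real l + 1) * eta \<rho> * F ^ 3 * U"
    unfolding hidden_deriv2_Suc using dev bound bound' by (intro chain2_diff_le) auto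
  also have "\<dots> \<le> deriv3_max \<rho> * (F * U) * (R * F)\<^sup>2 + deriv2_max \<rho> * ((real l + 1) * R * F\<^sup>2 * U) * (2 * (R * F))
        + deriv2_max \<rho> * (F * U) * (real l * R\<^sup>2 * F\<^sup>2)
        + 2 * real l * (real l + 1) * eta \<rho> * F ^ 3 * U * R\<^sup>2"
  proof -
    have "0 \<le> 2 * real l * (real l + 1) * eta \<rho> * F ^ 3 * U"
      using F U eta_ge_1[of \<rho>] by simp
    moreover have "1 \<le> R\<^sup>2"
      using R by simp
    ultimately show ?thesis
      using mult_left_mono[of 1 "R\<^sup>2"] by fastforce
  qed
  finally show "\<bar>hidden_deriv2 \<rho> n A b x p (Suc l) j - hidden_deriv2 \<rho> n A' b' x p (Suc l) j\<bar>
      \<le> (deriv3_max \<rho> + deriv2_max \<rho> * (3 * real l + 2) + 2 * real l * (real l + 1) * eta \<rho>)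
           * R\<^sup>2 * F ^ 3 * U"
    by (simp add: power2_eq_square power3_eq_cube algebra_simps)
qed

lemma preact_diff_bounded_Suc:
  assumes R: "1 \<le> R" and bounded: "params_bounded L n R A b" and l: "Suc l < L"
    and widths: "\<forall>k\<le>L. 1 \<le> n k" and diff: "preact_diff_bounded \<rho> n R A b A' b' x p l"
    and derivs: "preact_deriv_bounded \<rho> n R A b x p l" and derivs': "preact_deriv_bounded \<rho> n R A' b' x p l"
  shows "preact_diff_bounded \<rho> n R A b A' b' x p (Suc l)"
  unfolding preact_diff_bounded_def
proof (intro allI impI conjI)
  fix i
  assume i: "i < n (Suc (Suc l))"
  define F where "F = growth R n l"
  define m where "m = n (Suc l)"
  define U where "U = l1_dist_upto n A b A' b' (Suc l)"
  define T where "T = layer_l1_dist n A b A' b' (Suc (Suc l))"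
  define C where "C = deriv3_max \<rho> + deriv2_max \<rho> * (3 * real l + 2) + 2 * real l * (real l + 1) * eta \<rho>"
  have F: "1 \<le> F" and m: "1 \<le> real m"
    using growth_ge_1[OF R] widths l by (auto simp: F_def m_def)
  have U: "0 \<le> U"
    by (simp add: U_def l1_dist_upto_nonneg)
  have C: "0 \<le> C" "real l + 1 + C \<le> 2 * (real l + 1) * (real l + 2) * eta \<rho>"
    using deriv3_max_nonneg[of \<rho>] deriv2_max_nonneg[of \<rho>] eta_ge_1[of \<rho>] eta_step[of l \<rho>]
    by (simp_all add: C_def)
  have weights: "\<forall>j<m. \<bar>A (Suc (Suc l)) i j\<bar> \<le> R"
    using params_bounded_weight[OF bounded] l i by (simp add: m_def)
  have row: "(\<Sum>j<m. \<bar>A (Suc (Suc l)) i j - A' (Suc (Suc l)) i j\<bar>) + \<bar>b (Suc (Suc l)) i - b' (Suc (Suc l)) i\<bar> \<le> T"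
    using row_le_layer_l1_dist[of i n "Suc (Suc l)"] i by (simp add: T_def m_def row_l1_dist_def)
  then have row_weights: "(\<Sum>j<m. \<bar>A (Suc (Suc l)) i j - A' (Suc (Suc l)) i j\<bar>) \<le> T"
    using abs_ge_zero[of "b (Suc (Suc l)) i - b' (Suc (Suc l)) i"] by linarith
  have growth': "growth R n (Suc l) = R * m * F" and U': "l1_dist_upto n A b A' b' (Suc (Suc l)) = U + T"
    by (simp_all add: growth_Suc F_def m_def U_def T_def l1_dist_upto_Suc)
  note hidden_dev = hidden_diff_bounds[OF R diff derivs derivs', folded F_def U_def m_def C_def]
  note hidden_bound' = hidden_deriv_bounds[OF derivs', folded F_def m_def]
  show "\<bar>preact \<rho> n A b x (Suc l) i - preact \<rho> n A' b' x (Suc l) i\<bar>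
      \<le> growth R n (Suc l) * l1_dist_upto n A b A' b' (Suc (Suc l))"
    using layer_diff_step[OF weights row _ _ R m F] hidden_dev(1)
    by (simp add: preact_def hidden_Suc_preact abs_act_le_1 m_def growth' U')
  show "\<bar>preact_deriv \<rho> n A b x p (Suc l) i - preact_deriv \<rho> n A' b' x p (Suc l) i\<bar>
      \<le> (real (Suc l) + 1) * R * (growth R n (Suc l))\<^sup>2 * l1_dist_upto n A b A' b' (Suc (Suc l))"
    using layer_deriv_diff_step[OF weights row_weights _ _ R m F U, of _ _ "real l + 2"]
      hidden_dev(2) hidden_bound'(1)
    by (simp add: preact_deriv_def m_def growth' U' add.commute)
  have K: "C \<le> 2 * (real l + 1) * (real l + 2) * eta \<rho>" "real l + 1 \<le> 2 * (real l + 1) * (real l + 2) * eta \<rho>"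
    using C by linarith+
  have "\<bar>(\<Sum>j<m. A (Suc (Suc l)) i j * hidden_deriv2 \<rho> n A b x p (Suc l) j)
      - (\<Sum>j<m. A' (Suc (Suc l)) i j * hidden_deriv2 \<rho> n A' b' x p (Suc l) j)\<bar>
      \<le> 2 * (real l + 1) * (real l + 2) * eta \<rho> * (R * m * F) ^ 3 * (U + T)"
    by (rule layer_deriv2_diff_step[OF weights row_weights _ _ R m F U C(1) K(1) _ K(2)])
      (use hidden_dev(3) hidden_bound'(2) in \<open>auto simp: m_def\<close>)
  then show "\<bar>preact_deriv2 \<rho> n A b x p (Suc l) i - preact_deriv2 \<rho> n A' b' x p (Suc l) i\<bar>
      \<le> 2 * real (Suc l) * (real (Suc l) + 1) * eta \<rho> * growth R n (Suc l) ^ 3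
         * l1_dist_upto n A b A' b' (Suc (Suc l))"
    by (simp add: preact_deriv2_def m_def growth' U' algebra_simps)
qed

lemma preact_diff_bounded:
  assumes R: "1 \<le> R" and bounded: "params_bounded L n R A b" and bounded': "params_bounded L n R A' b'"
    and widths: "\<forall>k\<le>L. 1 \<le> n k" and p: "p < n 0" and x: "\<forall>j<n 0. \<bar>x j\<bar> \<le> 1"
  shows "l < L \<Longrightarrow> preact_diff_bounded \<rho> n R A b A' b' x p l"
proof (induction l)
  case 0
  then show ?case
    using preact_diff_bounded_0[OF R bounded _ x] by simp
next
  case (Suc l)
  then show ?case
    using preact_diff_bounded_Suc[OF R bounded _ widths]
      preact_deriv_bounded[OF R bounded widths p] preact_deriv_bounded[OF R bounded' widths p]
    by simp
qed

theorem lemma5p3: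
  fixes \<rho> :: activation and L d :: nat and n :: "nat \<Rightarrow> nat" and R :: real
    and A A' :: "nat \<Rightarrow> nat \<Rightarrow> nat \<Rightarrow> real" and b b' :: "nat \<Rightarrow> nat \<Rightarrow> real"
    and \<Omega> :: "(nat \<Rightarrow> real) set" and x :: "nat \<Rightarrow> real" and p :: nat
  assumes "R \<ge> 1" and "L \<ge> 2"
    and "n 0 = d" and "n L = 1" and "\<forall>l\<le>L. n l \<ge> 1"
    and "\<Omega> \<subseteq> {y. \<forall>i<d. \<bar>y i\<bar> < 1}"
    and "params_bounded L n R A b" and "params_bounded L n R A' b'"
    and "p < d" and "x \<in> \<Omega>"
  shows "\<bar>deriv (deriv (\<lambda>t. net \<rho> L n A b (x(p := t)))) (x p)
          - deriv (deriv (\<lambda>t. net \<rho> L n A' b' (x(p := t)))) (x p)\<bar>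
         \<le> 2 * real (L - 1) * real L * eta \<rho> * sqrt (real (nparams L n))
             * real (piw n (L - 1)) ^ 3 * R ^ (3 * L - 3) * param_dist L n A b A' b'"
proof -
  have x: "\<forall>j<n 0. \<bar>x j\<bar> \<le> 1"
    using assms(3,6,10) by fastforce
  have "preact_diff_bounded \<rho> n R A b A' b' x p (L - 1)"
    using preact_diff_bounded[OF assms(1,7,8,5) _ x] assms(2,3,9) by simp
  then have "\<bar>preact_deriv2 \<rho> n A b x p (L - 1) 0 - preact_deriv2 \<rho> n A' b' x p (L - 1) 0\<bar>
      \<le> 2 * real (L - 1) * real L * eta \<rho> * growth R n (L - 1) ^ 3 * l1_dist_upto n A b A' b' L"
    using assms(2,4) by (simp add: preact_diff_bounded_def of_nat_diff)
  also have "\<dots> \<le> 2 * real (L - 1) * real L * eta \<rho> * growth R n (L - 1) ^ 3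
      * (sqrt (real (nparams L n)) * param_dist L n A b A' b')"
    using l1_dist_upto_le_param_dist eta_ge_1[of \<rho>] assms(1)
    by (intro mult_left_mono) (auto simp: growth_def)
  also have "growth R n (L - 1) ^ 3 = real (piw n (L - 1)) ^ 3 * R ^ (3 * L - 3)"
  proof -
    have "3 * L - 3 = (L - 1) * 3"
      by simp
    then show ?thesis
      by (simp add: growth_def power_mult_distrib power_mult)
  qed
  finally show ?thesis
    using assms(2) by (simp add: net_eq_preact deriv2_preact algebra_simps)
qed

end
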